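(* Let $n\ge 6$ and let $e$ be any hyperedge of the Turán hypergraph $T(n,3,2)$. Then $\mathcal{E_S}(T(n,3,2))>\mathcal{E_S}(T(n,3,2)-e)$.
   Context: For a hypergraph $\mathcal{H}$ and distinct vertices $i,j$, the co-degree $c_{ij}$ is the number of hyperedges containing both $i$ and $j$. The Seidel matrix $\mathcal{S}(\mathcal{H})$ has zero diagonal and $(i,j)$-entry $1-2c_{ij}$ for $i\neq j$; the Seidel energy $\mathcal{E_S}(\mathcal{H})$ is the sum of the absolute values of its eigenvalues. The Turán hypergraph $T(n,3,2)$ has $n$ vertices partitioned into two parts $V_1,V_2$ whose sizes differ by at most $1$, and its hyperedges are all $3$-element vertex subsets meeting both $V_1$ and $V_2$ (i.e. it is the complete $3$-uniform bipartite hypergraph with parts of sizes $\lceil n/2\rceil,\lfloor n/2\rfloor$). For a hyperedge $e$, $\mathcal{H}-e$ denotes the hypergraph with the same vertex set and hyperedge set $E(\mathcal{H})\setminus\{e\}$. *)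

theory Defs
  imports "Jordan_Normal_Form.Char_Poly" "HOL-Computational_Algebra.Fundamental_Theorem_Algebra"
begin

text \<open>A hypergraph on vertex set {0..<n} is given by its set of hyperedges E (sets of vertices).\<close>

definition codegree :: "nat set set \<Rightarrow> nat \<Rightarrow> nat \<Rightarrow> nat" where
  "codegree E i j = card {e \<in> E. i \<in> e \<and> j \<in> e}"

definition seidel_matrix :: "nat \<Rightarrow> nat set set \<Rightarrow> real mat" where
  "seidel_matrix n E = mat n n (\<lambda>(i, j). if i = j then 0 else 1 - 2 * real (codegree E i j))"

text \<open>Seidel energy: sum of absolute values of the eigenvalues (with multiplicity),
  i.e. of the roots of the characteristic polynomial (all real, the matrix being symmetric).\<close>
definition seidel_energy :: "nat \<Rightarrow> nat set set \<Rightarrow> real" where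
  "seidel_energy n E =
     sum_mset (image_mset cmod (proots (char_poly (map_mat complex_of_real (seidel_matrix n E)))))"

text \<open>Turan hypergraph T(n,3,2) on {0..<n}: parts V1 = {0..<ceil(n/2)}, V2 = the rest.\<close>
definition turan_part1 :: "nat \<Rightarrow> nat set" where
  "turan_part1 n = {0..<(n + 1) div 2}"

definition turan_part2 :: "nat \<Rightarrow> nat set" where
  "turan_part2 n = {(n + 1) div 2..<n}"

definition turan_edges :: "nat \<Rightarrow> nat set set" where
  "turan_edges n = {e. e \<subseteq> {0..<n} \<and> card e = 3 \<and>
      e \<inter> turan_part1 n \<noteq> {} \<and> e \<inter> turan_part2 n \<noteq> {}}"

end

theory Submission
  imports Defs
begin

text \<open>
  The Seidel matrix of \<open>T(n,3,2)\<close> has zero diagonal, and its off-diagonal entries only depend on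
  the parts containing the two indices. For such a matrix a cell of size \<open>w\<close> contributes the
  eigenvalue \<open>-F p p\<close> with multiplicity \<open>w - 1\<close>, where \<open>F p p\<close> is the entry within the cell, and
  the remaining eigenvalues are those of the quotient matrix weighted by the cell sizes. Removing
  an edge \<open>{x, y, z}\<close> with \<open>x, y\<close> in one part refines the partition into the four cells \<open>{x, y}\<close>,
  \<open>{z}\<close> and the remainders of the two parts. In both cases every eigenvalue except the least root
  of the quotient polynomial is positive, and the trace is zero, so the energy is \<open>-2\<close> times that
  least root. Finally the negative root \<open>\<nu>\<close> of the quadratic quotient polynomial of \<open>T(n,3,2)\<close>
  lies below the least root of the quartic one of \<open>T(n,3,2) - e\<close>: the quartic is positive at \<open>\<nu>\<close>,
  because its remainder modulo the quadratic is, and negative at \<open>0\<close>. All sign conditions become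
  polynomials with positive coefficients after substituting \<open>s = k + 3\<close>, \<open>t = l + 3\<close> for the
  part sizes, so they hold whenever both parts have at least three vertices.
\<close>

section \<open>Characteristic polynomials of matrices that are constant on cells\<close>

text \<open>With unit weights this is a matrix with zero diagonal whose entries only depend on the cells
  \<open>c i\<close>, \<open>c j\<close>; with \<open>c = id\<close> and the cell sizes as weights it is the quotient matrix.\<close>

definition cell_matrix ::
    "nat \<Rightarrow> (nat \<Rightarrow> nat) \<Rightarrow> (nat \<Rightarrow> nat \<Rightarrow> 'a :: comm_ring_1) \<Rightarrow> (nat \<Rightarrow> 'a) \<Rightarrow> 'a mat" where
  "cell_matrix n c F w =
    mat n n (\<lambda>(i, j). w i * F (c i) (c j) - (if i = j then F (c i) (c i) else 0))"

lemma cell_matrix_dim [simp]: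
  "dim_row (cell_matrix n c F w) = n" "dim_col (cell_matrix n c F w) = n"
  "cell_matrix n c F w \<in> carrier_mat n n"
  unfolding cell_matrix_def by simp_all

lemma cell_matrix_cong:
  assumes "\<And>i. i < n \<Longrightarrow> w i = w' i" and "\<And>i. i < n \<Longrightarrow> c i = c' i"
  shows "cell_matrix n c F w = cell_matrix n c' F w'"
  unfolding cell_matrix_def using assms by (intro eq_matI) auto

lemma char_poly_diag_column:
  fixes A :: "'a :: comm_ring_1 mat"
  assumes A: "A \<in> carrier_mat n n" and i: "i < n"
    and col: "\<And>j. j < n \<Longrightarrow> j \<noteq> i \<Longrightarrow> A $$ (j, i) = 0"
  shows "char_poly A = [:- A $$ (i, i), 1:] * char_poly (mat_delete A i i)"
proof -
  define B where "B = char_poly_matrix A"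
  have B: "B \<in> carrier_mat n n" using A unfolding B_def by simp
  have "char_poly A = (\<Sum>j<n. B $$ (j, i) * cofactor B j i)"
    unfolding char_poly_def B_def[symmetric] by (rule laplace_expansion_column[OF B i])
  also have "\<dots> = (\<Sum>j\<in>{i}. B $$ (j, i) * cofactor B j i)"
    using A i col by (intro sum.mono_neutral_right) (auto simp: B_def char_poly_matrix_def)
  also have "\<dots> = [:- A $$ (i, i), 1:] * cofactor B i i"
    using A i by (simp add: B_def char_poly_matrix_def)
  also have "cofactor B i i = char_poly (mat_delete A i i)"
    using A i unfolding cofactor_def char_poly_def B_def
    by (auto intro!: arg_cong[of _ _ det] eq_matI simp: char_poly_matrix_def mat_delete_def)
  finally show ?thesis .
qed

text \<open>Subtracting column \<open>j\<close> from column \<open>n\<close> and adding row \<open>n\<close> to row \<open>j\<close> is a similarity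
  that clears column \<open>n\<close> off the diagonal and merges the weight of \<open>n\<close> into that of \<open>j\<close>.\<close>

lemma char_poly_cell_matrix_Suc:
  assumes j: "j < n" and cj: "c j = c n"
  shows "char_poly (cell_matrix (Suc n) c F w) =
    [:F (c n) (c n), 1:] * char_poly (cell_matrix n c F (w(j := w j + w n)))"
proof -
  let ?A = "cell_matrix (Suc n) c F w"
  define B where "B = add_col_sub_row (-1) j n ?A"
  have B: "B \<in> carrier_mat (Suc n) (Suc n)" unfolding B_def by simp
  have "similar_mat B ?A"
    unfolding B_def by (rule add_col_sub_row_similar[of _ "Suc n"]) (use j in auto)
  then have "char_poly ?A = char_poly B" by (simp add: char_poly_similar)
  have B_entry: "B $$ (r, k) =
      (if r = j \<and> k = n then ?A $$ (r, k) - ?A $$ (r, r) - ?A $$ (k, r) + ?A $$ (k, k)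
       else if r = j then ?A $$ (r, k) + ?A $$ (n, k)
       else if k = n then ?A $$ (r, k) - ?A $$ (r, j)
       else ?A $$ (r, k))" if "r < Suc n" "k < Suc n" for r k
    unfolding B_def using that j by (subst add_col_sub_index_row) auto
  have "char_poly B = [:- B $$ (n, n), 1:] * char_poly (mat_delete B n n)"
    using j cj by (intro char_poly_diag_column[OF B]) (auto simp: B_entry cell_matrix_def)
  also have "B $$ (n, n) = - F (c n) (c n)"
    using j cj by (simp add: B_entry cell_matrix_def)
  also have "mat_delete B n n = cell_matrix n c F (w(j := w j + w n))"
    using j cj B
    by (intro eq_matI) (auto simp: mat_delete_def B_entry cell_matrix_def algebra_simps)
  finally show ?thesis using \<open>char_poly ?A = char_poly B\<close> by simp
qed

lemma char_poly_cell_matrix_merge: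
  assumes "k \<le> m" and "\<And>r. k \<le> r \<Longrightarrow> r < m \<Longrightarrow> c r < k" and "\<And>p. p < k \<Longrightarrow> c p = p"
  shows "char_poly (cell_matrix m c F w) = (\<Prod>r\<in>{k..<m}. [:F (c r) (c r), 1:]) *
    char_poly (cell_matrix k (\<lambda>p. p) F
      (\<lambda>p. w p + (\<Sum>r\<in>{k..<m}. if c r = p then w r else 0)))"
  using assms(1,2)
proof (induction m arbitrary: w)
  case 0
  then have "cell_matrix 0 c F w = cell_matrix 0 (\<lambda>p. p) F (\<lambda>p. w p + 0)"
    by (intro cell_matrix_cong) auto
  then show ?case using 0 by simp
next
  case (Suc m)
  show ?case
  proof (cases "k = Suc m")
    case True
    have "cell_matrix (Suc m) c F w = cell_matrix (Suc m) (\<lambda>p. p) F (\<lambda>p. w p + 0)"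
      using assms(3) True by (intro cell_matrix_cong) auto
    then show ?thesis using True by simp
  next
    case False
    with Suc.prems have "k \<le> m" by simp
    define j where "j = c m"
    have j: "j < k" using Suc.prems(2)[of m] \<open>k \<le> m\<close> by (simp add: j_def)
    with \<open>k \<le> m\<close> have "j < m" by simp
    define w' where "w' = w(j := w j + w m)"
    have "char_poly (cell_matrix (Suc m) c F w) =
        [:F (c m) (c m), 1:] * char_poly (cell_matrix m c F w')"
      unfolding w'_def using \<open>j < m\<close> j assms(3)
      by (intro char_poly_cell_matrix_Suc) (auto simp: j_def)
    also have "char_poly (cell_matrix m c F w') = (\<Prod>r\<in>{k..<m}. [:F (c r) (c r), 1:]) *
        char_poly (cell_matrix k (\<lambda>p. p) F
          (\<lambda>p. w' p + (\<Sum>r\<in>{k..<m}. if c r = p then w' r else 0)))"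
      using \<open>k \<le> m\<close> Suc.prems by (intro Suc.IH) auto
    also have "cell_matrix k (\<lambda>p. p) F (\<lambda>p. w' p + (\<Sum>r\<in>{k..<m}. if c r = p then w' r else 0)) =
        cell_matrix k (\<lambda>p. p) F (\<lambda>p. w p + (\<Sum>r\<in>{k..<Suc m}. if c r = p then w r else 0))"
    proof (rule cell_matrix_cong)
      fix p assume "p < k"
      have "(\<Sum>r\<in>{k..<m}. if c r = p then w' r else 0) =
          (\<Sum>r\<in>{k..<m}. if c r = p then w r else 0)"
        using j by (intro sum.cong) (auto simp: w'_def)
      then show "w' p + (\<Sum>r\<in>{k..<m}. if c r = p then w' r else 0) =
          w p + (\<Sum>r\<in>{k..<Suc m}. if c r = p then w r else 0)"
        using \<open>k \<le> m\<close> by (simp add: w'_def j_def)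
    qed simp
    finally show ?thesis using \<open>k \<le> m\<close> by (simp add: prod.atLeastLessThan_Suc algebra_simps)
  qed
qed

lemma det_permute_rows_cols:
  fixes A :: "'a :: comm_ring_1 mat"
  assumes A: "A \<in> carrier_mat n n" and p: "p permutes {0..<n}"
  shows "det (mat n n (\<lambda>(i, j). A $$ (p i, p j))) = det A"
proof -
  define B where "B = mat n n (\<lambda>(i, j). A $$ (i, p j))"
  have pn: "i < n \<Longrightarrow> p i < n" for i using permutes_in_image[OF p] by auto
  have "mat n n (\<lambda>(i, j). A $$ (p i, p j)) = mat n n (\<lambda>(i, j). B $$ (p i, j))"
    unfolding B_def by (rule eq_matI) (auto simp: pn)
  then have "det (mat n n (\<lambda>(i, j). A $$ (p i, p j))) = signof p * det B"
    using det_permute_rows[of B n p] p unfolding B_def by simp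
  also have "det B = det (transpose_mat B)"
    unfolding B_def by (rule det_transpose[symmetric, of _ n]) simp
  also have "transpose_mat B = mat n n (\<lambda>(i, j). transpose_mat A $$ (p i, j))"
    unfolding B_def using A by (intro eq_matI) (auto simp: pn)
  also have "det \<dots> = signof p * det A"
    using det_permute_rows[of "transpose_mat A" n p] det_transpose[OF A] A p by simp
  finally show ?thesis by (cases p rule: sign_cases) simp_all
qed

lemma char_poly_permute_rows_cols:
  fixes A :: "'a :: comm_ring_1 mat"
  assumes A: "A \<in> carrier_mat n n" and p: "p permutes {0..<n}"
  shows "char_poly (mat n n (\<lambda>(i, j). A $$ (p i, p j))) = char_poly A"
proof -
  have pn: "i < n \<Longrightarrow> p i < n" for i using permutes_in_image[OF p] by auto
  have inj: "i < n \<Longrightarrow> j < n \<Longrightarrow> p i = p j \<longleftrightarrow> i = j" for i j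
    using permutes_inj[OF p] by (auto dest: injD)
  have "char_poly_matrix (mat n n (\<lambda>(i, j). A $$ (p i, p j))) =
      mat n n (\<lambda>(i, j). char_poly_matrix A $$ (p i, p j))"
    using A by (intro eq_matI) (auto simp: char_poly_matrix_def pn inj)
  then show ?thesis
    unfolding char_poly_def using det_permute_rows_cols[OF _ p, of "char_poly_matrix A"] A by simp
qed

lemma permutation_cell_representatives_first:
  fixes cell :: "nat \<Rightarrow> nat"
  assumes cell: "\<And>i. i < n \<Longrightarrow> cell i < k" and onto: "\<And>p. p < k \<Longrightarrow> \<exists>i<n. cell i = p"
  obtains \<pi> where "\<pi> permutes {0..<n}" "k \<le> n" "\<And>p. p < k \<Longrightarrow> cell (\<pi> p) = p"
proof -
  define rep where "rep p = (SOME i. i < n \<and> cell i = p)" for p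
  have rep: "rep p < n" "cell (rep p) = p" if "p < k" for p
    using someI_ex[OF onto[OF that]] unfolding rep_def by auto
  define R where "R = map rep [0..<k]"
  have R: "distinct R" "set R \<subseteq> {0..<n}"
    unfolding R_def distinct_map using rep by (auto intro!: inj_onI) metis
  define L where "L = R @ filter (\<lambda>i. i \<notin> set R) [0..<n]"
  have L: "distinct L" "set L = {0..<n}"
    unfolding L_def using R by auto
  then have "length L = n" using distinct_card by fastforce
  have "k \<le> n" using distinct_card[OF R(1)] card_mono[OF _ R(2)] by (simp add: R_def)
  have "bij_betw ((!) L) {..<n} {..<n}"
    using bij_betw_nth[OF L(1)] L(2) \<open>length L = n\<close> by (simp add: atLeast0LessThan)
  then have "(\<lambda>r. if r < n then L ! r else r) permutes {0..<n}"
    by (intro bij_imp_permutes)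
      (auto simp: atLeast0LessThan intro: bij_betw_cong[THEN iffD1])
  moreover have "cell (if p < n then L ! p else p) = p" if "p < k" for p
    using that rep \<open>k \<le> n\<close> by (simp add: L_def R_def nth_append)
  ultimately show ?thesis using \<open>k \<le> n\<close> that by blast
qed

lemma card_permutes_Collect:
  fixes \<pi> :: "nat \<Rightarrow> nat"
  assumes "\<pi> permutes {0..<n}"
  shows "card {r. r < n \<and> P (\<pi> r)} = card {i. i < n \<and> P i}"
proof -
  have "\<pi> ` {r. r < n \<and> P (\<pi> r)} = {i. i < n \<and> P i}"
  proof (intro equalityI subsetI)
    fix i assume i: "i \<in> {i. i < n \<and> P i}"
    then have "i \<in> \<pi> ` {0..<n}" using permutes_image[OF assms] by simp
    then show "i \<in> \<pi> ` {r. r < n \<and> P (\<pi> r)}" using i by auto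
  qed (use permutes_in_image[OF assms] in auto)
  moreover have "inj_on \<pi> {r. r < n \<and> P (\<pi> r)}"
    using permutes_inj[OF assms] by (auto intro: inj_on_subset)
  ultimately show ?thesis by (metis card_image)
qed

text \<open>After moving one representative of each cell to the front, every other index is merged
  into its representative.\<close>

lemma char_poly_cell_constant:
  fixes S :: "'a :: comm_ring_1 mat"
  assumes S: "S \<in> carrier_mat n n"
    and S_entry: "\<And>i j. i < n \<Longrightarrow> j < n \<Longrightarrow>
      S $$ (i, j) = (if i = j then 0 else F (cell i) (cell j))"
    and cell: "\<And>i. i < n \<Longrightarrow> cell i < k" and onto: "\<And>p. p < k \<Longrightarrow> \<exists>i<n. cell i = p"
  obtains g where
    "char_poly S = (\<Prod>r\<in>{k..<n}. [:F (g r) (g r), 1:]) *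
       char_poly (cell_matrix k (\<lambda>p. p) F (\<lambda>p. of_nat (card {i. i < n \<and> cell i = p})))"
    and "\<And>r. r \<in> {k..<n} \<Longrightarrow> g r < k"
    and "\<And>p. p < k \<Longrightarrow> card {r \<in> {k..<n}. g r = p} + 1 = card {i. i < n \<and> cell i = p}"
proof -
  obtain \<pi> where \<pi>: "\<pi> permutes {0..<n}" "k \<le> n" "\<And>p. p < k \<Longrightarrow> cell (\<pi> p) = p"
    using permutation_cell_representatives_first[OF cell onto] by blast
  have \<pi>_lt: "\<pi> r < n" if "r < n" for r
    using permutes_in_image[OF \<pi>(1)] that by simp
  have \<pi>_inj: "\<pi> i = \<pi> j \<longleftrightarrow> i = j" for i j
    using permutes_inj[OF \<pi>(1)] by (auto dest: injD)
  define c where "c r = cell (\<pi> r)" for r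
  have c_rep: "c p = p" if "p < k" for p using \<pi>(3)[OF that] by (simp add: c_def)
  have "mat n n (\<lambda>(i, j). S $$ (\<pi> i, \<pi> j)) = cell_matrix n c F (\<lambda>_. 1)"
    by (intro eq_matI) (auto simp: cell_matrix_def c_def S_entry \<pi>_lt \<pi>_inj)
  then have "char_poly S = char_poly (cell_matrix n c F (\<lambda>_. 1))"
    using char_poly_permute_rows_cols[OF S \<pi>(1)] by simp
  also have "\<dots> = (\<Prod>r\<in>{k..<n}. [:F (c r) (c r), 1:]) *
      char_poly (cell_matrix k (\<lambda>p. p) F
        (\<lambda>p. 1 + (\<Sum>r\<in>{k..<n}. if c r = p then 1 else 0)))"
    using \<pi> cell \<pi>_lt by (intro char_poly_cell_matrix_merge) (auto simp: c_def)
  finally have cp: "char_poly S = \<dots>" .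
  have count: "card {r \<in> {k..<n}. c r = p} + 1 = card {i. i < n \<and> cell i = p}"
    if "p < k" for p
  proof -
    have "{r. r < n \<and> c r = p} = insert p {r \<in> {k..<n}. c r = p}"
      using that \<pi>(2) c_rep by auto (metis c_rep not_le)
    moreover have "p \<notin> {r \<in> {k..<n}. c r = p}" "finite {r \<in> {k..<n}. c r = p}"
      using that by simp_all
    ultimately have "card {r. r < n \<and> c r = p} = card {r \<in> {k..<n}. c r = p} + 1"
      by simp
    then show ?thesis
      using card_permutes_Collect[OF \<pi>(1), of "\<lambda>i. cell i = p"] by (simp add: c_def)
  qed
  have "cell_matrix k (\<lambda>p. p) F (\<lambda>p. 1 + (\<Sum>r\<in>{k..<n}. if c r = p then 1 else 0)) =
      cell_matrix k (\<lambda>p. p) F (\<lambda>p. of_nat (card {i. i < n \<and> cell i = p}))"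
    by (intro cell_matrix_cong)
      (simp_all flip: count add: sum.If_cases Int_def conj_commute)
  then show ?thesis
    using that[of c] cp cell \<pi>_lt count by (simp add: c_def)
qed

definition matrix_energy :: "real mat \<Rightarrow> real" where
  "matrix_energy A =
    sum_mset (image_mset cmod (proots (char_poly (map_mat complex_of_real A))))"

lemma seidel_energy_eq_matrix_energy: "seidel_energy n E = matrix_energy (seidel_matrix n E)"
  unfolding seidel_energy_def matrix_energy_def ..

lemma sum_mset_image_sum_singletons:
  "finite A \<Longrightarrow> sum_mset (image_mset g (\<Sum>x\<in>A. {#h x#})) = (\<Sum>x\<in>A. g (h x))"
  by (induction A rule: finite_induct) auto

interpretation of_real_poly_hom: map_poly_comm_ring_hom complex_of_real ..

lemma matrix_energy_linear_factors:
  fixes m :: nat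
  assumes A: "A \<in> carrier_mat n n" and R: "finite R"
    and cp: "char_poly A = (\<Prod>r\<in>R. [:f r, 1:]) * (\<Prod>i<m. [:- \<rho> i, 1:])"
  shows "matrix_energy A = (\<Sum>r\<in>R. \<bar>f r\<bar>) + (\<Sum>i<m. \<bar>\<rho> i\<bar>)"
proof -
  have "char_poly (map_mat complex_of_real A) = map_poly complex_of_real (char_poly A)"
    using of_real_hom.char_poly_hom[OF A] by simp
  also have "\<dots> = (\<Prod>r\<in>R. [:complex_of_real (f r), 1:]) *
      (\<Prod>i<m. [:- complex_of_real (\<rho> i), 1:])"
    unfolding cp by (simp add: of_real_poly_hom.hom_mult of_real_poly_hom.hom_prod)
  finally have cp_complex: "char_poly (map_mat complex_of_real A) = \<dots>" .
  have "proots (char_poly (map_mat complex_of_real A)) =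
      (\<Sum>r\<in>R. {# - complex_of_real (f r) #}) + (\<Sum>i<m. {# complex_of_real (\<rho> i) #})"
    unfolding cp_complex by (subst proots_mult) (auto simp: proots_prod R prod_zero_iff)
  then show ?thesis using R by (simp add: matrix_energy_def sum_mset_image_sum_singletons)
qed

lemma matrix_energy_cell_constant:
  fixes S :: "real mat" and m :: nat
  assumes S: "S \<in> carrier_mat n n"
    and S_entry: "\<And>i j. i < n \<Longrightarrow> j < n \<Longrightarrow>
      S $$ (i, j) = (if i = j then 0 else F (cell i) (cell j))"
    and cell: "\<And>i. i < n \<Longrightarrow> cell i < k"
    and w: "\<And>p. p < k \<Longrightarrow> real (card {i. i < n \<and> cell i = p}) = w p"
      "\<And>p. p < k \<Longrightarrow> 1 \<le> w p"
    and quotient: "char_poly (cell_matrix k (\<lambda>p. p) F w) = (\<Prod>i<m. [:- \<rho> i, 1:])"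
  shows "matrix_energy S = (\<Sum>p<k. (w p - 1) * \<bar>F p p\<bar>) + (\<Sum>i<m. \<bar>\<rho> i\<bar>)"
proof -
  have onto: "\<exists>i<n. cell i = p" if "p < k" for p
  proof -
    have "0 < card {i. i < n \<and> cell i = p}"
      using w[OF that] by (simp flip: of_nat_0_less_iff)
    then show ?thesis by (auto simp: card_gt_0_iff)
  qed
  obtain g where cp: "char_poly S = (\<Prod>r\<in>{k..<n}. [:F (g r) (g r), 1:]) *
       char_poly (cell_matrix k (\<lambda>p. p) F (\<lambda>p. real (card {i. i < n \<and> cell i = p})))"
    and g: "\<And>r. r \<in> {k..<n} \<Longrightarrow> g r < k"
    and count: "\<And>p. p < k \<Longrightarrow>
      card {r \<in> {k..<n}. g r = p} + 1 = card {i. i < n \<and> cell i = p}"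
    using char_poly_cell_constant[OF S S_entry cell onto] by blast
  have "cell_matrix k (\<lambda>p. p) F (\<lambda>p. real (card {i. i < n \<and> cell i = p})) =
      cell_matrix k (\<lambda>p. p) F w"
    using w(1) by (intro cell_matrix_cong) auto
  with cp quotient
  have "matrix_energy S = (\<Sum>r\<in>{k..<n}. \<bar>F (g r) (g r)\<bar>) + (\<Sum>i<m. \<bar>\<rho> i\<bar>)"
    by (intro matrix_energy_linear_factors[OF S]) auto
  also have "(\<Sum>r\<in>{k..<n}. \<bar>F (g r) (g r)\<bar>) =
      (\<Sum>p<k. \<Sum>r\<in>{r \<in> {k..<n}. g r = p}. \<bar>F p p\<bar>)"
    using g by (subst sum.group[symmetric, of _ "{..<k}" g]) (auto intro!: sum.cong)
  also have "\<dots> = (\<Sum>p<k. (w p - 1) * \<bar>F p p\<bar>)"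
  proof (intro sum.cong refl)
    fix p assume "p \<in> {..<k}"
    then have "real (card {r \<in> {k..<n}. g r = p}) = w p - 1"
      using count[of p] w(1)[of p] by (simp flip: of_nat_Suc)
    then show "(\<Sum>r\<in>{r \<in> {k..<n}. g r = p}. \<bar>F p p\<bar>) = (w p - 1) * \<bar>F p p\<bar>" by simp
  qed
  finally show ?thesis .
qed

section \<open>Roots of monic real polynomials\<close>

lemma coeff_prod_linear_factors_top:
  fixes \<rho> :: "nat \<Rightarrow> 'a :: idom"
  shows "coeff (\<Prod>i<m. [:- \<rho> i, 1:]) m = 1"
proof -
  have "degree (\<Prod>i<m. [:- \<rho> i, 1:]) = m"
    by (subst degree_prod_sum_eq) auto
  then show ?thesis
    using lead_coeff_prod[of "\<lambda>i. [:- \<rho> i, 1:]" "{..<m}"] by simp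
qed

lemma coeff_prod_linear_factors_sum_roots:
  fixes \<rho> :: "nat \<Rightarrow> 'a :: idom"
  shows "coeff (\<Prod>i<Suc m. [:- \<rho> i, 1:]) m = - (\<Sum>i<Suc m. \<rho> i)"
proof (induction m)
  case (Suc m)
  then show ?case
    using coeff_prod_linear_factors_top[of \<rho> "Suc m"] by (simp add: algebra_simps)
qed simp

lemma monic_quadratic_roots:
  fixes c0 c1 :: real
  assumes "c0 < 0"
  obtains \<rho> :: "nat \<Rightarrow> real"
  where "[:c0, c1, 1:] = (\<Prod>i<2. [:- \<rho> i, 1:])" "\<rho> 0 < 0" "0 < \<rho> 1"
proof -
  define d where "d = sqrt (c1\<^sup>2 - 4 * c0)"
  have "\<bar>c1\<bar> < d"
    unfolding d_def using assms by (intro real_less_rsqrt) (simp add: power2_abs)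
  moreover have "0 \<le> c1\<^sup>2 - 4 * c0"
    using assms zero_le_power2[of c1] by linarith
  then have "d\<^sup>2 = c1\<^sup>2 - 4 * c0"
    unfolding d_def by simp
  ultimately have "[:c0, c1, 1:] = [:- ((- c1 - d) / 2), 1:] * [:- ((- c1 + d) / 2), 1:]"
    by (simp add: field_simps power2_eq_square)
  moreover have "(- c1 - d) / 2 < 0" "0 < (- c1 + d) / 2"
    using \<open>\<bar>c1\<bar> < d\<close> by auto
  ultimately show ?thesis
    by (intro that[of "\<lambda>i. if i = 0 then (- c1 - d) / 2 else (- c1 + d) / 2"])
      (simp_all add: numeral_2_eq_2 lessThan_Suc)
qed

lemma monic_quartic_factor_three_roots:
  fixes Q :: "'a :: idom poly"
  assumes deg: "degree Q = 4" and monic: "lead_coeff Q = 1"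
    and roots: "poly Q r0 = 0" "poly Q r1 = 0" "poly Q r2 = 0"
    and "r0 \<noteq> r1" "r0 \<noteq> r2" "r1 \<noteq> r2"
  obtains r3 where "Q = [:- r0, 1:] * [:- r1, 1:] * [:- r2, 1:] * [:- r3, 1:]"
proof -
  obtain Q1 where Q1: "Q = [:- r0, 1:] * Q1"
    using roots(1) by (metis poly_eq_0_iff_dvd dvdE)
  have "poly Q1 r1 = 0" using roots(2) assms by (simp add: Q1)
  then obtain Q2 where Q2: "Q1 = [:- r1, 1:] * Q2"
    by (metis poly_eq_0_iff_dvd dvdE)
  have "poly Q2 r2 = 0" using roots(3) assms by (simp add: Q1 Q2)
  then obtain Q3 where Q3: "Q2 = [:- r2, 1:] * Q3"
    by (metis poly_eq_0_iff_dvd dvdE)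
  have Q: "Q = [:- r0, 1:] * [:- r1, 1:] * [:- r2, 1:] * Q3"
    unfolding Q1 Q2 Q3 by (simp only: mult.assoc)
  then have "Q3 \<noteq> 0" using deg by auto
  then have "degree Q = 3 + degree Q3"
    unfolding Q by (simp add: degree_mult_eq del: mult_pCons_left mult_pCons_right)
  moreover have "lead_coeff Q = lead_coeff Q3"
    unfolding Q lead_coeff_mult by simp
  ultimately have "degree Q3 = 1" "lead_coeff Q3 = 1"
    using deg monic by simp_all
  then obtain r3 where "Q3 = [:- r3, 1:]"
    by (metis degree1_coeffs coeff_pCons_Suc coeff_pCons_0 degree_pCons_eq_if one_neq_zero
        minus_minus)
  with Q show ?thesis using that[of r3] by simp
qed

lemma monic_quartic_roots:
  fixes Q :: "real poly"
  assumes deg: "degree Q = 4" and monic: "lead_coeff Q = 1"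
    and "lo < 0" "0 < a" "a < b"
    and "0 < poly Q lo" "poly Q 0 < 0" "0 < poly Q a" "poly Q b < 0"
  obtains \<rho> :: "nat \<Rightarrow> real" where "Q = (\<Prod>i<4. [:- \<rho> i, 1:])" "lo < \<rho> 0" "\<rho> 0 < 0"
    "\<And>i. 0 < i \<Longrightarrow> i < 4 \<Longrightarrow> 0 < \<rho> i"
proof -
  obtain r0 where r0: "lo < r0" "r0 < 0" "poly Q r0 = 0"
    using poly_IVT_neg[of lo 0 Q] assms by blast
  obtain r1 where r1: "0 < r1" "r1 < a" "poly Q r1 = 0"
    using poly_IVT_pos[of 0 a Q] assms by blast
  obtain r2 where r2: "a < r2" "r2 < b" "poly Q r2 = 0"
    using poly_IVT_neg[of a b Q] assms by blast
  obtain r3 where Q: "Q = [:- r0, 1:] * [:- r1, 1:] * [:- r2, 1:] * [:- r3, 1:]"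
    using monic_quartic_factor_three_roots[OF deg monic r0(3) r1(3) r2(3)] r0 r1 r2 assms by force
  have "(b - r0) * (b - r1) * (b - r2) * (b - r3) < 0"
    using \<open>poly Q b < 0\<close> by (simp add: Q algebra_simps)
  moreover have "0 < (b - r0) * (b - r1) * (b - r2)"
    using r0 r1 r2 assms by simp
  ultimately have "b < r3"
    using mult_less_0_iff[of "(b - r0) * (b - r1) * (b - r2)" "b - r3"] by auto
  have "Q = (\<Prod>i<4. [:- [r0, r1, r2, r3] ! i, 1:])"
    unfolding Q by (simp add: eval_nat_numeral del: mult_pCons_right mult_pCons_left)
  moreover have "0 < [r0, r1, r2, r3] ! i" if "0 < i" "i < 4" for i
  proof -
    have "i = 1 \<or> i = 2 \<or> i = 3" using that by arith
    then show ?thesis using r1 r2 \<open>b < r3\<close> assms by auto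
  qed
  ultimately show ?thesis
    using r0 by (intro that[of "(!) [r0, r1, r2, r3]"]) simp_all
qed

lemma sum_abs_roots_single_nonpositive:
  fixes \<rho> :: "nat \<Rightarrow> real"
  assumes "\<rho> 0 \<le> 0" and "\<And>i. 0 < i \<Longrightarrow> i \<le> m \<Longrightarrow> 0 \<le> \<rho> i"
  shows "(\<Sum>i<Suc m. \<bar>\<rho> i\<bar>) = - coeff (\<Prod>i<Suc m. [:- \<rho> i, 1:]) m - 2 * \<rho> 0"
proof -
  have "(\<Sum>i<m. \<bar>\<rho> (Suc i)\<bar>) = (\<Sum>i<m. \<rho> (Suc i))"
    using assms(2) by (intro sum.cong) auto
  then have "(\<Sum>i<Suc m. \<bar>\<rho> i\<bar>) = - \<rho> 0 + (\<Sum>i<m. \<rho> (Suc i))"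
    using assms(1) unfolding sum.lessThan_Suc_shift by simp
  also have "\<dots> = (\<Sum>i<Suc m. \<rho> i) - 2 * \<rho> 0"
    unfolding sum.lessThan_Suc_shift by simp
  finally show ?thesis
    unfolding coeff_prod_linear_factors_sum_roots by simp
qed

section \<open>The quotient matrices of complete bipartite triple systems\<close>

lemma det_mat_Suc:
  "det (mat (Suc n) (Suc n) f) = (\<Sum>j<Suc n. (-1) ^ j * f (0, j) *
    det (mat n n (\<lambda>(i, k). f (Suc i, if k < j then k else Suc k))))"
proof -
  have "det (mat (Suc n) (Suc n) f) =
      (\<Sum>j<Suc n. mat (Suc n) (Suc n) f $$ (0, j) * cofactor (mat (Suc n) (Suc n) f) 0 j)"
    by (rule laplace_expansion_row) auto
  also have "\<dots> = (\<Sum>j<Suc n. (-1) ^ j * f (0, j) *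
      det (mat n n (\<lambda>(i, k). f (Suc i, if k < j then k else Suc k))))"
  proof (intro sum.cong refl)
    fix j assume "j \<in> {..<Suc n}"
    then have "mat_delete (mat (Suc n) (Suc n) f) 0 j =
        mat n n (\<lambda>(i, k). f (Suc i, if k < j then k else Suc k))"
      by (intro eq_matI) (auto simp: mat_delete_def)
    then show "mat (Suc n) (Suc n) f $$ (0, j) * cofactor (mat (Suc n) (Suc n) f) 0 j =
        (-1) ^ j * f (0, j) * det (mat n n (\<lambda>(i, k). f (Suc i, if k < j then k else Suc k)))"
      using \<open>j \<in> {..<Suc n}\<close> by (simp add: cofactor_def)
  qed
  finally show ?thesis .
qed

lemma poly_char_poly_mat:
  fixes f :: "nat \<times> nat \<Rightarrow> 'a :: field"
  shows "poly (char_poly (mat n n f)) x =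
    det (mat n n (\<lambda>(i, j). (if i = j then x else 0) - f (i, j)))"
  by (subst char_poly_matrix[of _ n])
    (auto simp: char_matrix_def intro!: arg_cong[of _ _ det] eq_matI)

text \<open>Parts \<open>0\<close> and \<open>1\<close> have sizes \<open>s\<close> and \<open>t\<close>; a pair of vertices has codegree \<open>t\<close> inside part \<open>0\<close>,
  \<open>s\<close> inside part \<open>1\<close>, and \<open>s + t - 2\<close> across.\<close>

definition bipartite_cell_entry :: "real \<Rightarrow> real \<Rightarrow> nat \<Rightarrow> nat \<Rightarrow> real" where
  "bipartite_cell_entry s t p q =
    (if p \<noteq> q then 5 - 2 * (s + t) else if p = 0 then 1 - 2 * t else 1 - 2 * s)"

text \<open>After removing an edge \<open>{x, y, z}\<close> with \<open>x, y\<close> in part \<open>0\<close>, the cells are \<open>{x, y}\<close>, \<open>{z}\<close> and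
  the remainders of parts \<open>0\<close> and \<open>1\<close>, numbered so that \<open>p mod 2\<close> is the part of cell \<open>p\<close>; the
  pairs inside the edge lose one common edge.\<close>

definition bipartite_edge_cell_entry :: "real \<Rightarrow> real \<Rightarrow> nat \<Rightarrow> nat \<Rightarrow> real" where
  "bipartite_edge_cell_entry s t p q =
    bipartite_cell_entry s t (p mod 2) (q mod 2) + (if p \<le> 1 \<and> q \<le> 1 then 2 else 0)"

definition bipartite_quotient_poly :: "real \<Rightarrow> real \<Rightarrow> real poly" where
  "bipartite_quotient_poly s t =
    [:1 - 3 * s - 3 * t + 2 * s\<^sup>2 - 16 * s * t + 2 * t\<^sup>2 + 14 * s\<^sup>2 * t + 14 * s * t\<^sup>2
        - 4 * s ^ 3 * t - 4 * s\<^sup>2 * t\<^sup>2 - 4 * s * t ^ 3,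
      2 - 3 * s - 3 * t + 4 * s * t, 1:]"

definition bipartite_edge_quotient_poly :: "real \<Rightarrow> real \<Rightarrow> real poly" where
  "bipartite_edge_quotient_poly s t =
    [:307 - 291 * s - 591 * t + 136 * s\<^sup>2 + 556 * s * t + 380 * t\<^sup>2 - 28 * s ^ 3 - 334 * s\<^sup>2 * t
        - 294 * s * t\<^sup>2 - 84 * t ^ 3 + 104 * s ^ 3 * t + 4 * s\<^sup>2 * t\<^sup>2 + 48 * s * t ^ 3
        - 8 * s ^ 4 * t + 56 * s ^ 3 * t\<^sup>2 + 56 * s\<^sup>2 * t ^ 3 + 8 * s * t ^ 4
        - 16 * s ^ 4 * t\<^sup>2 - 16 * s ^ 3 * t ^ 3 - 16 * s\<^sup>2 * t ^ 4,
      - 130 + 173 * s + 85 * t - 32 * s\<^sup>2 - 40 * s * t + 52 * t\<^sup>2 - 4 * s ^ 3 + 8 * s\<^sup>2 * t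
        - 8 * s * t\<^sup>2 - 20 * t ^ 3 - 28 * s ^ 3 * t - 40 * s\<^sup>2 * t\<^sup>2 - 28 * s * t ^ 3
        + 8 * s ^ 4 * t + 16 * s ^ 3 * t\<^sup>2 + 16 * s\<^sup>2 * t ^ 3 + 8 * s * t ^ 4,
      - 52 + 11 * s + 15 * t + 8 * s\<^sup>2 + 8 * t\<^sup>2 + 6 * s\<^sup>2 * t + 6 * s * t\<^sup>2
        - 4 * s ^ 3 * t - 4 * s\<^sup>2 * t\<^sup>2 - 4 * s * t ^ 3,
      2 - 5 * s - 5 * t + 4 * s * t, 1:]"

lemma char_poly_bipartite_quotient:
  "char_poly (cell_matrix 2 (\<lambda>p. p) (bipartite_cell_entry s t) ((!) [s, t])) =
    bipartite_quotient_poly s t" (is "?p = ?q")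
proof (rule poly_eq_poly_eq_iff[THEN iffD1, OF ext])
  show "poly ?p x = poly ?q x" for x
    unfolding cell_matrix_def poly_char_poly_mat
    by (simp add: det_mat_Suc numeral_2_eq_2 bipartite_cell_entry_def bipartite_quotient_poly_def)
      (simp add: algebra_simps power2_eq_square power3_eq_cube)
qed

lemma char_poly_bipartite_edge_quotient:
  "char_poly (cell_matrix 4 (\<lambda>p. p) (bipartite_edge_cell_entry s t) ((!) [2, 1, s - 2, t - 1])) =
    bipartite_edge_quotient_poly s t" (is "?p = ?q")
proof (rule poly_eq_poly_eq_iff[THEN iffD1, OF ext])
  show "poly ?p x = poly ?q x" for x
    unfolding cell_matrix_def poly_char_poly_mat
    by (simp add: det_mat_Suc eval_nat_numeral mod_Suc bipartite_edge_cell_entry_def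
        bipartite_cell_entry_def bipartite_edge_quotient_poly_def)
      (simp add: algebra_simps power2_eq_square power3_eq_cube power4_eq_xxxx)
qed

lemma bipartite_quotient_polys_signs:
  fixes s t :: real
  assumes "3 \<le> s" "3 \<le> t"
  shows "poly (bipartite_quotient_poly s t) 0 < 0"
    and "poly (bipartite_edge_quotient_poly s t) 0 < 0"
    and "0 < poly (bipartite_edge_quotient_poly s t) (2 * s - 1)"
    and "poly (bipartite_edge_quotient_poly s t) (2 * (s + t) - 3) < 0"
proof -
  define k l where "k = s - 3" and "l = t - 3"
  have kl: "0 \<le> k" "0 \<le> l" and st: "s = k + 3" "t = l + 3"
    using assms by (simp_all add: k_def l_def)
  note expand = st bipartite_quotient_poly_def bipartite_edge_quotient_poly_def algebra_simps
    power2_eq_square power3_eq_cube power4_eq_xxxx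
  have "- poly (bipartite_quotient_poly s t) 0 =
      341 + 309 * k + 309 * l + 100 * k\<^sup>2 + 208 * k * l + 100 * l\<^sup>2 + 12 * k ^ 3 + 46 * k\<^sup>2 * l
      + 46 * k * l\<^sup>2 + 12 * l ^ 3 + 4 * k ^ 3 * l + 4 * k\<^sup>2 * l\<^sup>2 + 4 * k * l ^ 3"
    by (simp add: expand)
  also have "\<dots> > 0" using kl by (simp add: add_pos_nonneg)
  finally show "poly (bipartite_quotient_poly s t) 0 < 0" by simp
  have "- poly (bipartite_edge_quotient_poly s t) 0 =
      7811 + 11541 * k + 10665 * l + 6482 * k\<^sup>2 + 13220 * k * l + 5542 * l\<^sup>2 + 1660 * k ^ 3 + 6070 * k\<^sup>2 * l + 5670 * k * l\<^sup>2 + 1308 * l ^ 3 + 168 * k ^ 4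
      + 1240 * k ^ 3 * l + 2012 * k\<^sup>2 * l\<^sup>2 + 1104 * k * l ^ 3 + 120 * l ^ 4 + 104 * k ^ 4 * l
      + 280 * k ^ 3 * l\<^sup>2 + 280 * k\<^sup>2 * l ^ 3 + 88 * k * l ^ 4 + 16 * k ^ 4 * l\<^sup>2 + 16 * k ^ 3 * l ^ 3
      + 16 * k\<^sup>2 * l ^ 4"
    by (simp add: expand)
  also have "\<dots> > 0" using kl by (simp add: add_pos_nonneg)
  finally show "poly (bipartite_edge_quotient_poly s t) 0 < 0" by simp
  have "poly (bipartite_edge_quotient_poly s t) (2 * s - 1) =
      384 + 512 * k + 640 * l + 288 * k\<^sup>2 + 672 * k * l + 288 * l\<^sup>2 + 64 * k ^ 3 + 208 * k\<^sup>2 * l + 272 * k * l\<^sup>2 + 32 * l ^ 3 + 32 * k ^ 3 * l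
      + 32 * k\<^sup>2 * l\<^sup>2 + 32 * k * l ^ 3"
    by (simp add: expand)
  also have "\<dots> > 0" using kl by (simp add: add_pos_nonneg)
  finally show "0 < poly (bipartite_edge_quotient_poly s t) (2 * s - 1)" .
  have "- poly (bipartite_edge_quotient_poly s t) (2 * (s + t) - 3) =
      800 + 1856 * k + 2096 * l + 1616 * k\<^sup>2 + 3232 * k * l + 1824 * l\<^sup>2 + 656 * k ^ 3 + 2136 * k\<^sup>2 * l + 2080 * k * l\<^sup>2 + 648 * l ^ 3
      + 96 * k ^ 4 + 664 * k ^ 3 * l + 1000 * k\<^sup>2 * l\<^sup>2 + 592 * k * l ^ 3 + 80 * l ^ 4 + 80 * k ^ 4 * l
      + 200 * k ^ 3 * l\<^sup>2 + 200 * k\<^sup>2 * l ^ 3 + 64 * k * l ^ 4 + 16 * k ^ 4 * l\<^sup>2 + 16 * k ^ 3 * l ^ 3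
      + 16 * k\<^sup>2 * l ^ 4"
    by (simp add: expand)
  also have "\<dots> > 0" using kl by (simp add: add_pos_nonneg)
  finally show "poly (bipartite_edge_quotient_poly s t) (2 * (s + t) - 3) < 0" by simp
qed

text \<open>Below, \<open>\<alpha> * x + \<beta>\<close> is the remainder of the quartic quotient polynomial modulo the
  quadratic one.\<close>

lemma bipartite_edge_quotient_poly_pos_at_neg_root:
  fixes s t x :: real
  assumes "3 \<le> s" "3 \<le> t" and "x < 0" and "poly (bipartite_quotient_poly s t) x = 0"
  shows "0 < poly (bipartite_edge_quotient_poly s t) x"
proof -
  define \<alpha> where "\<alpha> = - 24 - 20 * s - 116 * t + 16 * s\<^sup>2 + 272 * s * t + 112 * t\<^sup>2 - 80 * s\<^sup>2 * t
    - 112 * s * t\<^sup>2 - 16 * t ^ 3"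
  define \<beta> where "\<beta> = 360 - 468 * s - 772 * t + 296 * s\<^sup>2 - 176 * s * t + 552 * t\<^sup>2 - 64 * s ^ 3
    + 664 * s\<^sup>2 * t + 776 * s * t\<^sup>2 - 128 * t ^ 3 - 368 * s ^ 3 * t - 704 * s\<^sup>2 * t\<^sup>2 - 480 * s * t ^ 3
    + 64 * s ^ 4 * t + 160 * s ^ 3 * t\<^sup>2 + 160 * s\<^sup>2 * t ^ 3 + 96 * s * t ^ 4"
  have "poly (bipartite_edge_quotient_poly s t) x =
      poly (bipartite_quotient_poly s t) x * (x\<^sup>2 - 2 * (s + t) * x - 53 + 18 * s + 22 * t + 4 * s * t)
      + \<alpha> * x + \<beta>"
    by (simp add: bipartite_quotient_poly_def bipartite_edge_quotient_poly_def \<alpha>_def \<beta>_def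
        algebra_simps power2_eq_square power3_eq_cube power4_eq_xxxx)
  then have remainder: "poly (bipartite_edge_quotient_poly s t) x = \<alpha> * x + \<beta>"
    using assms(4) by simp
  define k l where "k = s - 3" and "l = t - 3"
  have kl: "0 \<le> k" "0 \<le> l" and st: "s = k + 3" "t = l + 3"
    using assms by (simp_all add: k_def l_def)
  have "- \<alpha> =
      2448 + 1556 * k + 1796 * l + 224 * k\<^sup>2 + 880 * k * l + 368 * l\<^sup>2 + 80 * k\<^sup>2 * l
      + 112 * k * l\<^sup>2 + 16 * l ^ 3"
    by (simp add: \<alpha>_def st algebra_simps power2_eq_square power3_eq_cube)
  also have "\<dots> > 0" using kl by (simp add: add_pos_nonneg)
  finally have "\<alpha> < 0" by simp
  have "\<beta> =
      27312 + 30516 * k + 32756 * l + 13088 * k\<^sup>2 + 29344 * k * l + 15264 * l\<^sup>2 + 2576 * k ^ 3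
      + 9544 * k\<^sup>2 * l + 10376 * k * l\<^sup>2 + 3328 * l ^ 3 + 192 * k ^ 4 + 1360 * k ^ 3 * l
      + 2176 * k\<^sup>2 * l\<^sup>2 + 1632 * k * l ^ 3 + 288 * l ^ 4 + 64 * k ^ 4 * l + 160 * k ^ 3 * l\<^sup>2
      + 160 * k\<^sup>2 * l ^ 3 + 96 * k * l ^ 4"
    by (simp add: \<beta>_def st algebra_simps power2_eq_square power3_eq_cube power4_eq_xxxx)
  also have "\<dots> > 0" using kl by (simp add: add_pos_nonneg)
  finally have "0 < \<beta>" .
  show ?thesis
    unfolding remainder using \<open>\<alpha> < 0\<close> \<open>0 < \<beta>\<close> \<open>x < 0\<close>
    by (simp add: add_pos_pos mult_neg_neg)
qed

lemma bipartite_quotient_polys_roots: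
  fixes s t :: real
  assumes "3 \<le> s" "3 \<le> t"
  obtains \<nu> \<rho> :: "nat \<Rightarrow> real"
  where "bipartite_quotient_poly s t = (\<Prod>i<2. [:- \<nu> i, 1:])" "\<nu> 0 < 0" "0 < \<nu> 1"
    and "bipartite_edge_quotient_poly s t = (\<Prod>i<4. [:- \<rho> i, 1:])" "\<nu> 0 < \<rho> 0" "\<rho> 0 < 0"
      "\<And>i. 0 < i \<Longrightarrow> i < 4 \<Longrightarrow> 0 < \<rho> i"
proof -
  note signs = bipartite_quotient_polys_signs[OF assms]
  obtain \<nu> :: "nat \<Rightarrow> real"
    where \<nu>': "[:poly (bipartite_quotient_poly s t) 0, 2 - 3 * s - 3 * t + 4 * s * t, 1:] =
      (\<Prod>i<2. [:- \<nu> i, 1:])"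
      and \<nu>: "\<nu> 0 < 0" "0 < \<nu> 1"
    by (rule monic_quadratic_roots[OF signs(1)])
  have Q2: "bipartite_quotient_poly s t = (\<Prod>i<2. [:- \<nu> i, 1:])"
    unfolding \<nu>'[symmetric] by (simp add: bipartite_quotient_poly_def)
  have "poly (bipartite_quotient_poly s t) (\<nu> 0) = 0"
    unfolding Q2 by (simp add: numeral_2_eq_2)
  then have pos_at_\<nu>: "0 < poly (bipartite_edge_quotient_poly s t) (\<nu> 0)"
    using assms \<nu>(1) by (intro bipartite_edge_quotient_poly_pos_at_neg_root)
  have deg: "degree (bipartite_edge_quotient_poly s t) = 4"
    "lead_coeff (bipartite_edge_quotient_poly s t) = 1"
    by (simp_all add: bipartite_edge_quotient_poly_def)
  have points: "0 < 2 * s - 1" "2 * s - 1 < 2 * (s + t) - 3"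
    using assms by simp_all
  show ?thesis
  proof (rule monic_quartic_roots[OF deg \<nu>(1) points pos_at_\<nu> signs(2-4)])
    fix \<rho> :: "nat \<Rightarrow> real"
    assume "bipartite_edge_quotient_poly s t = (\<Prod>i<4. [:- \<rho> i, 1:])" "\<nu> 0 < \<rho> 0" "\<rho> 0 < 0"
      "\<And>i. 0 < i \<Longrightarrow> i < 4 \<Longrightarrow> 0 < \<rho> i"
    then show ?thesis by (rule that[OF Q2 \<nu>])
  qed
qed

section \<open>Complete bipartite triple systems\<close>

lemma seidel_matrix_carrier [simp]: "seidel_matrix n E \<in> carrier_mat n n"
  by (simp add: seidel_matrix_def)

lemma seidel_matrix_remove_edge:
  assumes "finite E" and "e \<in> E" and "i < n" "j < n"
  shows "seidel_matrix n (E - {e}) $$ (i, j) =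
    seidel_matrix n E $$ (i, j) + (if i \<noteq> j \<and> i \<in> e \<and> j \<in> e then 2 else 0)"
proof -
  define C where "C = {f \<in> E. i \<in> f \<and> j \<in> f}"
  have "finite C" using assms(1) by (simp add: C_def)
  have "codegree (E - {e}) i j = card (C - {e})"
    unfolding codegree_def C_def by (rule arg_cong[of _ _ card]) auto
  moreover have "real (card (C - {e})) = real (card C) - (if i \<in> e \<and> j \<in> e then 1 else 0)"
    using \<open>finite C\<close> assms(2) card_Suc_Diff1[of C e]
    by (auto simp: C_def simp flip: of_nat_Suc)
  ultimately show ?thesis
    using assms(3,4) by (simp add: seidel_matrix_def codegree_def C_def)
qed

definition bipartite_triples :: "nat \<Rightarrow> nat set \<Rightarrow> nat set set" where
  "bipartite_triples n A = {e. e \<subseteq> {0..<n} \<and> card e = 3 \<and> e \<inter> A \<noteq> {} \<and> \<not> e \<subseteq> A}"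

lemma turan_edges_eq_bipartite_triples: "turan_edges n = bipartite_triples n (turan_part1 n)"
  unfolding turan_edges_def bipartite_triples_def turan_part1_def turan_part2_def
  by (auto simp: subset_iff disjoint_iff)

lemma bipartite_triples_complement: "bipartite_triples n ({0..<n} - A) = bipartite_triples n A"
  unfolding bipartite_triples_def by auto

lemma finite_bipartite_triples: "finite (bipartite_triples n A)"
  by (rule finite_subset[of _ "Pow {0..<n}"]) (auto simp: bipartite_triples_def)

lemma bipartite_triples_edge_cases:
  assumes A: "A \<subseteq> {0..<n}" and "e \<in> bipartite_triples n A"
  obtains B x y z where "B \<subseteq> {0..<n}" "bipartite_triples n B = bipartite_triples n A"
    "card B = card A \<or> card B = n - card A"
    "e = {x, y, z}" "x \<in> B" "y \<in> B" "x \<noteq> y" "z \<in> {0..<n} - B"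
proof -
  have e: "e \<subseteq> {0..<n}" "card e = 3" "e \<inter> A \<noteq> {}" "e - A \<noteq> {}"
    using assms(2) unfolding bipartite_triples_def by auto
  have "finite e" using e(1) finite_subset by blast
  have "card (e \<inter> A) + card (e - A) = 3"
    using card_Int_Diff[OF \<open>finite e\<close>, of A] e(2) by simp
  then consider "2 \<le> card (e \<inter> A)" | "2 \<le> card (e - A)" by linarith
  then show ?thesis
  proof cases
    case 1
    then obtain x y where "x \<in> e \<inter> A" "y \<in> e \<inter> A" "x \<noteq> y"
      using card_le_Suc0_iff_eq[of "e \<inter> A"] \<open>finite e\<close> by auto
    moreover obtain z where "z \<in> e - A" using e(4) by blast
    moreover from calculation have "{x, y, z} = e"
      using \<open>finite e\<close> e(2) by (intro card_subset_eq) (auto simp: card_insert_if)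
    ultimately show ?thesis using A e(1) by (intro that[of A x y z]) auto
  next
    case 2
    then obtain x y where "x \<in> e - A" "y \<in> e - A" "x \<noteq> y"
      using card_le_Suc0_iff_eq[of "e - A"] \<open>finite e\<close> by auto
    moreover obtain z where "z \<in> e \<inter> A" using e(3) by blast
    moreover from calculation have "{x, y, z} = e"
      using \<open>finite e\<close> e(2) by (intro card_subset_eq) (auto simp: card_insert_if)
    moreover have "card ({0..<n} - A) = n - card A"
      using A finite_subset[OF A] by (simp add: card_Diff_subset)
    ultimately show ?thesis
      using A e(1) bipartite_triples_complement by (intro that[of "{0..<n} - A" x y z]) auto
  qed
qed

lemma codegree_bipartite_triples:
  assumes A: "A \<subseteq> {0..<n}" and ij: "i < n" "j < n" "i \<noteq> j"
  shows "codegree (bipartite_triples n A) i j =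
    (if i \<in> A \<and> j \<in> A then n - card A else if i \<notin> A \<and> j \<notin> A then card A else n - 2)"
proof -
  define X where "X = {x \<in> {0..<n} - {i, j}. (i \<in> A \<longleftrightarrow> j \<in> A) \<longrightarrow> (x \<in> A \<longleftrightarrow> i \<notin> A)}"
  have "{e \<in> bipartite_triples n A. i \<in> e \<and> j \<in> e} = (\<lambda>x. {i, j, x}) ` X"
  proof (intro equalityI subsetI)
    fix e assume "e \<in> {e \<in> bipartite_triples n A. i \<in> e \<and> j \<in> e}"
    then have e: "e \<subseteq> {0..<n}" "card e = 3" "e \<inter> A \<noteq> {}" "\<not> e \<subseteq> A" "i \<in> e" "j \<in> e"
      unfolding bipartite_triples_def by auto
    then have "card (e - {i, j}) = 1"
      using ij by (simp add: card_Diff_subset finite_subset[OF e(1)])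
    then obtain x where x: "e - {i, j} = {x}" by (auto simp: card_Suc_eq)
    then have "e = {i, j, x}" using e(5,6) by auto
    then show "e \<in> (\<lambda>x. {i, j, x}) ` X"
      using e x unfolding X_def by auto
  next
    fix e assume "e \<in> (\<lambda>x. {i, j, x}) ` X"
    then obtain x where "e = {i, j, x}" "x \<in> X" by blast
    then show "e \<in> {e \<in> bipartite_triples n A. i \<in> e \<and> j \<in> e}"
      using ij unfolding X_def bipartite_triples_def by auto
  qed
  moreover have "inj_on (\<lambda>x. {i, j, x}) X"
    unfolding X_def by (rule inj_onI) (auto simp: insert_eq_iff doubleton_eq_iff)
  ultimately have "codegree (bipartite_triples n A) i j = card X"
    unfolding codegree_def by (simp add: card_image)
  also have "X = (if i \<in> A \<and> j \<in> A then {0..<n} - A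
      else if i \<notin> A \<and> j \<notin> A then A else {0..<n} - {i, j})"
    unfolding X_def using A by auto
  also have "card \<dots> =
      (if i \<in> A \<and> j \<in> A then n - card A else if i \<notin> A \<and> j \<notin> A then card A else n - 2)"
    using A ij by (simp add: card_Diff_subset finite_subset numeral_2_eq_2)
  finally show ?thesis .
qed

lemma seidel_matrix_bipartite_triples:
  assumes "A \<subseteq> {0..<n}" and "i < n" "j < n"
  shows "seidel_matrix n (bipartite_triples n A) $$ (i, j) = (if i = j then 0 else
    bipartite_cell_entry (card A) (n - card A) (of_bool (i \<notin> A)) (of_bool (j \<notin> A)))"
proof (cases "i = j")
  case False
  have "card A \<le> n" using card_mono[OF _ assms(1)] by simp
  moreover have "2 \<le> n" using assms(2,3) False by linarith
  ultimately show ?thesis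
    using codegree_bipartite_triples[OF assms False] assms(2,3)
    by (simp add: seidel_matrix_def bipartite_cell_entry_def of_nat_diff)
qed (simp add: assms seidel_matrix_def)

lemma seidel_energy_bipartite_triples:
  fixes \<rho> :: "nat \<Rightarrow> real"
  assumes A: "A \<subseteq> {0..<n}" "a \<in> A" "b \<in> {0..<n} - A"
    and roots: "bipartite_quotient_poly (card A) (n - card A) = (\<Prod>i<2. [:- \<rho> i, 1:])"
      "\<rho> 0 \<le> 0" "0 \<le> \<rho> 1"
  shows "seidel_energy n (bipartite_triples n A) = - 2 * \<rho> 0"
proof -
  define s t where "s = real (card A)" and "t = real (n - card A)"
  have "finite A" using A(1) finite_subset by blast
  have "A \<subset> {0..<n}" using A by auto
  then have "card A < n" using psubset_card_mono[of "{0..<n}" A] by simp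
  then have st: "1 \<le> s" "1 \<le> t"
    using A(2) \<open>finite A\<close> by (auto simp: s_def t_def card_gt_0_iff Suc_le_eq)
  define side where "side i = (of_bool (i \<notin> A) :: nat)" for i
  have entry: "seidel_matrix n (bipartite_triples n A) $$ (i, j) =
      (if i = j then 0 else bipartite_cell_entry s t (side i) (side j))" if "i < n" "j < n" for i j
    using seidel_matrix_bipartite_triples[OF A(1) that] by (simp add: side_def s_def t_def)
  have sizes: "real (card {i. i < n \<and> side i = p}) = [s, t] ! p" if "p < 2" for p
  proof -
    have "{i. i < n \<and> side i = 0} = A" "{i. i < n \<and> side i = 1} = {0..<n} - A"
      using A(1) by (auto simp: side_def)
    moreover have "p = 0 \<or> p = 1" using that by arith
    ultimately show ?thesis
      using A(1) \<open>finite A\<close> by (auto simp: s_def t_def card_Diff_subset)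
  qed
  have "seidel_energy n (bipartite_triples n A) =
      (\<Sum>p<2. ([s, t] ! p - 1) * \<bar>bipartite_cell_entry s t p p\<bar>) + (\<Sum>i<2. \<bar>\<rho> i\<bar>)"
    unfolding seidel_energy_eq_matrix_energy
  proof (rule matrix_energy_cell_constant
      [where n = n and cell = side and F = "bipartite_cell_entry s t" and w = "(!) [s, t]"])
    show "char_poly (cell_matrix 2 (\<lambda>p. p) (bipartite_cell_entry s t) ((!) [s, t])) =
        (\<Prod>i<2. [:- \<rho> i, 1:])"
      using roots(1) by (simp add: char_poly_bipartite_quotient s_def t_def)
    show "1 \<le> [s, t] ! p" if "p < 2" for p
      using that st by (auto simp: less_2_cases_iff)
    show "side i < 2" for i by (simp add: side_def)
  qed (simp_all add: entry sizes)
  also have "(\<Sum>i<2. \<bar>\<rho> i\<bar>) = - coeff (bipartite_quotient_poly s t) 1 - 2 * \<rho> 0"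
    using sum_abs_roots_single_nonpositive[of \<rho> 1] roots
    by (simp add: s_def t_def numeral_2_eq_2)
  also have "(\<Sum>p<2. ([s, t] ! p - 1) * \<bar>bipartite_cell_entry s t p p\<bar>) =
      coeff (bipartite_quotient_poly s t) 1"
    using st
    by (simp add: numeral_2_eq_2 bipartite_cell_entry_def bipartite_quotient_poly_def algebra_simps)
  finally show ?thesis by simp
qed

definition edge_cells :: "nat set \<Rightarrow> nat \<Rightarrow> nat \<Rightarrow> nat \<Rightarrow> nat \<Rightarrow> nat" where
  "edge_cells A x y z i =
    (if i = x \<or> i = y then 0 else if i = z then 1 else if i \<in> A then 2 else 3)"

lemma card_edge_cells:
  assumes A: "A \<subseteq> {0..<n}" and xyz: "x \<in> A" "y \<in> A" "x \<noteq> y" "z \<in> {0..<n} - A" and "p < 4"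
  shows "real (card {i. i < n \<and> edge_cells A x y z i = p}) =
    [2, 1, real (card A) - 2, real (n - card A) - 1] ! p"
proof -
  have "finite A" using A finite_subset by blast
  have "{i. i < n \<and> edge_cells A x y z i = 0} = {x, y}"
    "{i. i < n \<and> edge_cells A x y z i = 1} = {z}"
    "{i. i < n \<and> edge_cells A x y z i = 2} = A - {x, y}"
    "{i. i < n \<and> edge_cells A x y z i = 3} = {0..<n} - A - {z}"
    using A xyz by (auto simp: edge_cells_def)
  moreover have "card {x, y} \<le> card A" "card {z} \<le> card ({0..<n} - A)"
    using xyz \<open>finite A\<close> by (intro card_mono; auto)+
  moreover have "card ({0..<n} - A) = n - card A"
    using A \<open>finite A\<close> by (simp add: card_Diff_subset)
  moreover have "p = 0 \<or> p = 1 \<or> p = 2 \<or> p = 3" using \<open>p < 4\<close> by arith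
  ultimately show ?thesis
    using xyz \<open>finite A\<close> by (elim disjE) (simp_all add: card_Diff_subset of_nat_diff)
qed

lemma seidel_energy_bipartite_triples_remove_edge:
  fixes \<rho> :: "nat \<Rightarrow> real"
  assumes A: "A \<subseteq> {0..<n}" and xyz: "x \<in> A" "y \<in> A" "x \<noteq> y" "z \<in> {0..<n} - A"
    and sizes: "3 \<le> card A" "2 \<le> n - card A"
    and roots: "bipartite_edge_quotient_poly (card A) (n - card A) = (\<Prod>i<4. [:- \<rho> i, 1:])"
      "\<rho> 0 \<le> 0" "\<And>i. 0 < i \<Longrightarrow> i < 4 \<Longrightarrow> 0 \<le> \<rho> i"
  shows "seidel_energy n (bipartite_triples n A - {{x, y, z}}) = - 2 * \<rho> 0"
proof -
  define s t where "s = real (card A)" and "t = real (n - card A)"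
  define cell where "cell = edge_cells A x y z"
  have st: "3 \<le> s" "2 \<le> t" using sizes by (simp_all add: s_def t_def)
  have "{x, y, z} \<in> bipartite_triples n A"
    using A xyz unfolding bipartite_triples_def by (auto simp: card_insert_if)
  have cell_side: "cell i mod 2 = of_bool (i \<notin> A)"
    and cell_edge: "cell i \<le> 1 \<longleftrightarrow> i \<in> {x, y, z}" for i
    using xyz by (auto simp: cell_def edge_cells_def)
  have entry: "seidel_matrix n (bipartite_triples n A - {{x, y, z}}) $$ (i, j) =
      (if i = j then 0 else bipartite_edge_cell_entry s t (cell i) (cell j))" if "i < n" "j < n" for i j
    using that unfolding seidel_matrix_remove_edge[OF finite_bipartite_triples \<open>{x, y, z} \<in> _\<close> that]
      seidel_matrix_bipartite_triples[OF A that] bipartite_edge_cell_entry_def cell_side cell_edge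
    by (simp add: s_def t_def)
  have "seidel_energy n (bipartite_triples n A - {{x, y, z}}) =
      (\<Sum>p<4. ([2, 1, s - 2, t - 1] ! p - 1) * \<bar>bipartite_edge_cell_entry s t p p\<bar>) + (\<Sum>i<4. \<bar>\<rho> i\<bar>)"
    unfolding seidel_energy_eq_matrix_energy
  proof (rule matrix_energy_cell_constant[where n = n and cell = cell
        and F = "bipartite_edge_cell_entry s t" and w = "(!) [2, 1, s - 2, t - 1]"])
    show "char_poly (cell_matrix 4 (\<lambda>p. p) (bipartite_edge_cell_entry s t)
        ((!) [2, 1, s - 2, t - 1])) = (\<Prod>i<4. [:- \<rho> i, 1:])"
      using roots(1) by (simp add: char_poly_bipartite_edge_quotient s_def t_def)
    show "1 \<le> [2, 1, s - 2, t - 1] ! p" if "p < 4" for p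
      using that st by (auto simp: less_Suc_eq numeral_eq_Suc)
    show "cell i < 4" for i by (simp add: cell_def edge_cells_def)
    show "real (card {i. i < n \<and> cell i = p}) = [2, 1, s - 2, t - 1] ! p" if "p < 4" for p
      unfolding cell_def s_def t_def by (rule card_edge_cells[OF A xyz that])
  qed (simp_all add: entry)
  also have "(\<Sum>i<4. \<bar>\<rho> i\<bar>) = - coeff (bipartite_edge_quotient_poly s t) 3 - 2 * \<rho> 0"
    using sum_abs_roots_single_nonpositive[of \<rho> 3] roots
    by (simp add: s_def t_def eval_nat_numeral)
  also have "(\<Sum>p<4. ([2, 1, s - 2, t - 1] ! p - 1) * \<bar>bipartite_edge_cell_entry s t p p\<bar>) =
      coeff (bipartite_edge_quotient_poly s t) 3"
    using st by (simp add: eval_nat_numeral mod_Suc bipartite_edge_cell_entry_def bipartite_cell_entry_def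
        bipartite_edge_quotient_poly_def algebra_simps)
  finally show ?thesis by simp
qed

lemma seidel_energy_bipartite_triples_remove_edge_less:
  assumes A: "A \<subseteq> {0..<n}" and xyz: "x \<in> A" "y \<in> A" "x \<noteq> y" "z \<in> {0..<n} - A"
    and sizes: "3 \<le> card A" "3 \<le> n - card A"
  shows "seidel_energy n (bipartite_triples n A - {{x, y, z}}) < seidel_energy n (bipartite_triples n A)"
proof (rule bipartite_quotient_polys_roots[of "card A" "n - card A"])
  show "3 \<le> real (card A)" "3 \<le> real (n - card A)"
    using sizes by simp_all
next
  fix \<nu> \<rho> :: "nat \<Rightarrow> real"
  assume \<nu>: "bipartite_quotient_poly (card A) (n - card A) = (\<Prod>i<2. [:- \<nu> i, 1:])"
      "\<nu> 0 < 0" "0 < \<nu> 1"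
    and \<rho>: "bipartite_edge_quotient_poly (card A) (n - card A) = (\<Prod>i<4. [:- \<rho> i, 1:])"
      "\<nu> 0 < \<rho> 0" "\<rho> 0 < 0" "\<And>i. 0 < i \<Longrightarrow> i < 4 \<Longrightarrow> 0 < \<rho> i"
  have "seidel_energy n (bipartite_triples n A) = - 2 * \<nu> 0"
    using A xyz \<nu> by (intro seidel_energy_bipartite_triples) auto
  moreover have "seidel_energy n (bipartite_triples n A - {{x, y, z}}) = - 2 * \<rho> 0"
    using A xyz sizes \<rho> by (intro seidel_energy_bipartite_triples_remove_edge) (auto intro: less_imp_le)
  ultimately show ?thesis using \<rho>(2) by simp
qed

theorem corollary2p14:
  fixes n :: nat and e :: "nat set"
  assumes "n \<ge> 6" and "e \<in> turan_edges n"
  shows "seidel_energy n (turan_edges n) > seidel_energy n (turan_edges n - {e})"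
proof -
  define A where "A = turan_part1 n"
  have A: "A \<subseteq> {0..<n}" "card A = (n + 1) div 2"
    by (auto simp: A_def turan_part1_def)
  obtain B x y z where B: "B \<subseteq> {0..<n}" "turan_edges n = bipartite_triples n B"
      "card B = card A \<or> card B = n - card A"
    and e: "e = {x, y, z}" and xyz: "x \<in> B" "y \<in> B" "x \<noteq> y" "z \<in> {0..<n} - B"
    using bipartite_triples_edge_cases[OF A(1)] assms(2)
    unfolding A_def turan_edges_eq_bipartite_triples by metis
  have "3 \<le> card B" "3 \<le> n - card B"
    using B(3) A(2) assms(1) by auto
  then show ?thesis
    unfolding B(2) e using B(1) xyz by (intro seidel_energy_bipartite_triples_remove_edge_less)
qed

end
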